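(* Let $A$ be an irreducible idempotent semiring and $M$ an irreducible $\mathbb{F}_1$-algebra. Then the semiring $A\otimes_{\mathbb{F}_1}M$ is irreducible. Moreover, if neither $A$ nor $M$ has nontrivial zero-divisors, then neither does $A\otimes_{\mathbb{F}_1}M$. In particular, for any (commutative) monoid $M$, the monoid semiring $A[M]$ is irreducible, and if $A$ has no nontrivial zero-divisors, neither does $A[M]$.
   Context: Semirings are commutative with $1\neq0$; idempotent means $a+a=a$. An $\mathbb{F}_1$-algebra is a commutative monoid $M$ with an absorbing element $0_M$. A semiring (resp. $\mathbb{F}_1$-algebra) is irreducible if whenever a product $xy$ is nilpotent, $x$ or $y$ is nilpotent. $A\otimes_{\mathbb{F}_1}M$ is the monoid semiring $A[M]$ with $0_M$ identified with $0_A$. *)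

theory Defs
  imports Main
begin

definition nilpotent_in :: "('b \<Rightarrow> 'b \<Rightarrow> 'b) \<Rightarrow> 'b \<Rightarrow> 'b \<Rightarrow> 'b \<Rightarrow> bool" where
  "nilpotent_in mul z e x \<longleftrightarrow> (\<exists>n. ((mul x) ^^ n) e = z)"

definition irreducible_str :: "'b set \<Rightarrow> ('b \<Rightarrow> 'b \<Rightarrow> 'b) \<Rightarrow> 'b \<Rightarrow> 'b \<Rightarrow> bool" where
  "irreducible_str C mul z e \<longleftrightarrow>
     (\<forall>x\<in>C. \<forall>y\<in>C. nilpotent_in mul z e (mul x y) \<longrightarrow>
        nilpotent_in mul z e x \<or> nilpotent_in mul z e y)"

definition no_zero_divisors_str :: "'b set \<Rightarrow> ('b \<Rightarrow> 'b \<Rightarrow> 'b) \<Rightarrow> 'b \<Rightarrow> bool" where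
  "no_zero_divisors_str C mul z \<longleftrightarrow> (\<forall>x\<in>C. \<forall>y\<in>C. mul x y = z \<longrightarrow> x = z \<or> y = z)"

definition idempotent_semiring :: "'a::comm_semiring_1 itself \<Rightarrow> bool" where
  "idempotent_semiring _ \<longleftrightarrow> (\<forall>a::'a. a + a = a)"

text \<open>F1-algebras: commutative monoids with an absorbing element, i.e. the sort
  {comm_monoid_mult, mult_zero}.  The tensor product A \<otimes>_F1 M is the monoid
  semiring A[M] with the basis element of 0_M identified with 0_A; concretely,
  finitely supported functions M \<Rightarrow> A vanishing at 0_M, with convolution
  product in which contributions landing at 0_M are discarded.\<close>

definition tensor_carrier :: "('m::{comm_monoid_mult,mult_zero} \<Rightarrow> 'a::comm_semiring_1) set" where
  "tensor_carrier = {f. finite {m. f m \<noteq> 0} \<and> f 0 = 0}"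

definition tensor_add :: "('m::{comm_monoid_mult,mult_zero} \<Rightarrow> 'a::comm_semiring_1) \<Rightarrow> ('m \<Rightarrow> 'a) \<Rightarrow> ('m \<Rightarrow> 'a)" where
  "tensor_add f g = (\<lambda>m. f m + g m)"

definition tensor_mult :: "('m::{comm_monoid_mult,mult_zero} \<Rightarrow> 'a::comm_semiring_1) \<Rightarrow> ('m \<Rightarrow> 'a) \<Rightarrow> ('m \<Rightarrow> 'a)" where
  "tensor_mult f g = (\<lambda>m. if m = 0 then 0 else
      (\<Sum>p\<in>{(x, y). f x \<noteq> 0 \<and> g y \<noteq> 0 \<and> x * y = m}. f (fst p) * g (snd p)))"

definition tensor_zero :: "'m::{comm_monoid_mult,mult_zero} \<Rightarrow> 'a::comm_semiring_1" where
  "tensor_zero = (\<lambda>m. 0)"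

definition tensor_one :: "'m::{comm_monoid_mult,mult_zero} \<Rightarrow> 'a::comm_semiring_1" where
  "tensor_one = (\<lambda>m. if m = 1 \<and> m \<noteq> 0 then 1 else 0)"

definition msr_carrier :: "('m::comm_monoid_mult \<Rightarrow> 'a::comm_semiring_1) set" where
  "msr_carrier = {f. finite {m. f m \<noteq> 0}}"

definition msr_add :: "('m::comm_monoid_mult \<Rightarrow> 'a::comm_semiring_1) \<Rightarrow> ('m \<Rightarrow> 'a) \<Rightarrow> ('m \<Rightarrow> 'a)" where
  "msr_add f g = (\<lambda>m. f m + g m)"

definition msr_mult :: "('m::comm_monoid_mult \<Rightarrow> 'a::comm_semiring_1) \<Rightarrow> ('m \<Rightarrow> 'a) \<Rightarrow> ('m \<Rightarrow> 'a)" where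
  "msr_mult f g = (\<lambda>m.
      (\<Sum>p\<in>{(x, y). f x \<noteq> 0 \<and> g y \<noteq> 0 \<and> x * y = m}. f (fst p) * g (snd p)))"

definition msr_zero :: "'m::comm_monoid_mult \<Rightarrow> 'a::comm_semiring_1" where
  "msr_zero = (\<lambda>m. 0)"

definition msr_one :: "'m::comm_monoid_mult \<Rightarrow> 'a::comm_semiring_1" where
  "msr_one = (\<lambda>m. if m = 1 then 1 else 0)"

end

theory Submission
  imports Defs "HOL-Library.Multiset"
begin

text \<open>Both \<open>A \<otimes>\<^sub>\<bbbF>\<^sub>1 M\<close> and \<open>A[M]\<close> are contracted monoid semirings \<open>A[M]/A[I]\<close>,
  for the ideals \<open>I = {0}\<close> and \<open>I = {}\<close> of \<open>M\<close>. In an idempotent semiring a sum vanishes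
  only if each summand does, so the coefficient of \<open>m\<^sup>n\<close> in \<open>f\<^sup>n\<close> vanishes only if
  \<open>f(m)\<^sup>n\<close> does: a nilpotent \<open>f\<close> has only coefficients \<open>f(m)\<close> that are nilpotent in \<open>A\<close> or
  sit at monomials \<open>m\<close> nilpotent modulo \<open>I\<close>. Conversely, if this holds for every \<open>m\<close> in
  the finite support of \<open>f\<close>, then \<open>f\<^sup>n = 0\<close> for large \<open>n\<close>: by pigeonhole every word of
  length \<open>n\<close> over the support repeats some letter often enough to kill its
  coefficient or to push its monomial into \<open>I\<close>. If \<open>f\<close> and \<open>g\<close> are not nilpotent, pick
  such bad monomials \<open>m\<close>, \<open>m'\<close>; irreducibility of \<open>A\<close> and \<open>M\<close> makes \<open>f(m) g(m')\<close> and \<open>m m'\<close>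
  bad for \<open>f g\<close>, and the same coefficient comparison handles zero divisors.\<close>

definition contracted_mult ::
    "'m::comm_monoid_mult set \<Rightarrow> ('m \<Rightarrow> 'a::comm_semiring_1) \<Rightarrow> ('m \<Rightarrow> 'a) \<Rightarrow> ('m \<Rightarrow> 'a)" where
  "contracted_mult I f g = (\<lambda>m. if m \<in> I then 0 else
      (\<Sum>p\<in>{(x, y). f x \<noteq> 0 \<and> g y \<noteq> 0 \<and> x * y = m}. f (fst p) * g (snd p)))"

definition contracted_one :: "'m::comm_monoid_mult set \<Rightarrow> 'm \<Rightarrow> 'a::comm_semiring_1" where
  "contracted_one I = (\<lambda>m. if m = 1 \<and> m \<notin> I then 1 else 0)"

definition contracted_carrier :: "'m::comm_monoid_mult set \<Rightarrow> ('m \<Rightarrow> 'a::comm_semiring_1) set" where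
  "contracted_carrier I = {f. finite {m. f m \<noteq> 0} \<and> (\<forall>m\<in>I. f m = 0)}"

abbreviation contracted_power ::
    "'m::comm_monoid_mult set \<Rightarrow> ('m \<Rightarrow> 'a::comm_semiring_1) \<Rightarrow> nat \<Rightarrow> ('m \<Rightarrow> 'a)" where
  "contracted_power I f n \<equiv> (contracted_mult I f ^^ n) (contracted_one I)"

lemma tensor_as_contracted:
  "tensor_carrier = contracted_carrier {0}"
  "tensor_mult = contracted_mult {0}"
  "tensor_one = contracted_one {0}"
  "tensor_zero = (\<lambda>_. 0)"
  by (auto simp: tensor_carrier_def contracted_carrier_def tensor_mult_def contracted_mult_def
      tensor_one_def contracted_one_def tensor_zero_def fun_eq_iff)

lemma msr_as_contracted:
  "msr_carrier = contracted_carrier {}"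
  "msr_mult = contracted_mult {}"
  "msr_one = contracted_one {}"
  "msr_zero = (\<lambda>_. 0)"
  by (auto simp: msr_carrier_def contracted_carrier_def msr_mult_def contracted_mult_def
      msr_one_def contracted_one_def msr_zero_def fun_eq_iff)

lemma nilpotent_in_times_iff:
  "nilpotent_in (*) 0 1 (x :: 'a::{monoid_mult,zero}) \<longleftrightarrow> (\<exists>n. x ^ n = 0)"
proof -
  have "((*) x ^^ n) 1 = x ^ n" for n
    by (induction n) auto
  then show ?thesis
    by (simp add: nilpotent_in_def)
qed

lemma idem_add_eq_0_imp_eq_0:
  fixes a b :: "'a::comm_monoid_add"
  assumes idem: "\<And>c::'a. c + c = c" and "a + b = 0"
  shows "a = 0"
proof -
  have "a = a + (a + b)"
    using assms(2) by simp
  also have "\<dots> = a + b"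
    by (simp add: idem flip: add.assoc)
  finally show ?thesis
    using assms(2) by simp
qed

lemma power_add_eq_power_plus: "\<exists>c. (a + b) ^ n = a ^ n + (c :: 'a::comm_semiring_1)"
proof (induction n)
  case 0
  show ?case
    by (rule exI[of _ 0]) simp
next
  case (Suc n)
  then obtain c where "(a + b) ^ n = a ^ n + c" by blast
  then have "(a + b) ^ Suc n = a ^ Suc n + (a * c + b * (a ^ n + c))"
    by (simp add: algebra_simps)
  then show ?case by blast
qed

lemma power_dvd_prod_mset_image:
  assumes "q \<le> count W x"
  shows "f x ^ q dvd prod_mset (image_mset f W)"
proof -
  have "image_mset f (replicate_mset q x) \<subseteq># image_mset f W"
    using assms by (intro image_mset_subseteq_mono) (simp add: count_le_replicate_mset_subset_eq)
  then show ?thesis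
    by (metis prod_mset_subset_imp_dvd image_replicate_mset prod_mset_replicate_mset)
qed

lemma multiset_pigeonhole:
  assumes "finite S" "set_mset W \<subseteq> S" "(\<Sum>x\<in>S. q x) < size W"
  shows "\<exists>x\<in>S. q x \<le> count W x"
proof (rule ccontr)
  assume "\<not> ?thesis"
  then have "(\<Sum>x\<in>S. count W x) \<le> (\<Sum>x\<in>S. q x)"
    by (intro sum_mono) auto
  moreover have "size W = (\<Sum>x\<in>S. count W x)"
    unfolding size_multiset_overloaded_eq using assms(1,2)
    by (intro sum.mono_neutral_left) (auto simp: not_in_iff)
  ultimately show False
    using assms(3) by simp
qed

lemma finite_support_contracted_mult:
  fixes f g :: "'m::comm_monoid_mult \<Rightarrow> 'a::comm_semiring_1"
  assumes "finite {m. f m \<noteq> 0}" "finite {m. g m \<noteq> 0}"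
  shows "finite {m. contracted_mult I f g m \<noteq> 0}"
proof (rule finite_subset)
  show "{m. contracted_mult I f g m \<noteq> 0} \<subseteq> (\<lambda>(x, y). x * y) ` ({m. f m \<noteq> 0} \<times> {m. g m \<noteq> 0})"
    by (auto simp: contracted_mult_def split: if_splits elim!: sum.not_neutral_contains_not_neutral)
qed (use assms in auto)

lemma finite_support_contracted_power:
  fixes f :: "'m::comm_monoid_mult \<Rightarrow> 'a::comm_semiring_1"
  assumes "finite {m. f m \<noteq> 0}"
  shows "finite {m. contracted_power I f n m \<noteq> 0}"
proof (induction n)
  case 0
  have "{m. contracted_one I m \<noteq> (0::'a)} \<subseteq> {1}"
    by (auto simp: contracted_one_def split: if_splits)
  then show ?case
    by (auto intro: finite_subset)
qed (simp add: finite_support_contracted_mult assms)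

lemma contracted_mult_split:
  fixes f g :: "'m::comm_monoid_mult \<Rightarrow> 'a::comm_semiring_1"
  assumes f: "finite {m. f m \<noteq> 0}" and g: "finite {m. g m \<noteq> 0}" and "x * y \<notin> I"
  shows "\<exists>c. contracted_mult I f g (x * y) = f x * g y + c"
proof (cases "f x = 0 \<or> g y = 0")
  case False
  let ?P = "{(x', y'). f x' \<noteq> 0 \<and> g y' \<noteq> 0 \<and> x' * y' = x * y}"
  have "finite ?P"
    by (rule finite_subset[of _ "{m. f m \<noteq> 0} \<times> {m. g m \<noteq> 0}"]) (use f g in auto)
  moreover have "(x, y) \<in> ?P"
    using False by simp
  ultimately have "(\<Sum>p\<in>?P. f (fst p) * g (snd p))
      = f x * g y + (\<Sum>p\<in>?P - {(x, y)}. f (fst p) * g (snd p))"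
    using sum.remove[of ?P "(x, y)" "\<lambda>p. f (fst p) * g (snd p)"] by simp
  then show ?thesis
    using \<open>x * y \<notin> I\<close> by (auto simp: contracted_mult_def)
qed (auto simp: contracted_mult_def)

lemma contracted_power_at_power:
  fixes f :: "'m::comm_monoid_mult \<Rightarrow> 'a::comm_semiring_1"
  assumes ideal: "\<And>x y. x \<in> I \<Longrightarrow> x * y \<in> I" and f: "finite {m. f m \<noteq> 0}"
  shows "m ^ n \<notin> I \<Longrightarrow> \<exists>c. contracted_power I f n (m ^ n) = f m ^ n + c"
proof (induction n)
  case 0
  then show ?case
    by (intro exI[of _ 0]) (simp add: contracted_one_def)
next
  case (Suc n)
  have "m ^ n \<notin> I"
    using Suc.prems ideal[of "m ^ n" m] by (auto simp: mult.commute)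
  then obtain c where c: "contracted_power I f n (m ^ n) = f m ^ n + c"
    using Suc.IH by blast
  have "m * m ^ n \<notin> I"
    using Suc.prems by simp
  then obtain d where "contracted_mult I f (contracted_power I f n) (m * m ^ n)
      = f m * contracted_power I f n (m ^ n) + d"
    using contracted_mult_split[OF f finite_support_contracted_power[OF f]] by blast
  then have "contracted_power I f (Suc n) (m ^ Suc n) = f m ^ Suc n + (f m * c + d)"
    by (simp add: c algebra_simps)
  then show ?case by blast
qed

lemma contracted_nilpotentD:
  assumes zero_sum_free: "\<And>a b::'a. a + b = 0 \<Longrightarrow> a = 0"
    and ideal: "\<And>x y. x \<in> I \<Longrightarrow> x * y \<in> I"
    and f: "finite {m. f m \<noteq> 0}" and nil: "contracted_power I f n = (\<lambda>_. 0 :: 'a::comm_semiring_1)"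
  shows "f m ^ n = 0 \<or> m ^ n \<in> I"
proof (cases "m ^ n \<in> I")
  case False
  then obtain c where "contracted_power I f n (m ^ n) = f m ^ n + c"
    using contracted_power_at_power[OF ideal f] by blast
  then have "f m ^ n + c = 0"
    using nil by simp
  then show ?thesis
    by (blast dest: zero_sum_free)
qed simp

text \<open>The induction is generalised over the multiplier \<open>c\<close>: a nonzero summand
  \<open>c f(x) h(y)\<close> of the next power is handled by the hypothesis for \<open>c f(x)\<close>.\<close>

lemma contracted_power_nonzero_word:
  fixes f :: "'m::comm_monoid_mult \<Rightarrow> 'a::comm_semiring_1"
  assumes "c * contracted_power I f n k \<noteq> 0"
  shows "\<exists>W. size W = n \<and> set_mset W \<subseteq> {m. f m \<noteq> 0} \<and> prod_mset W = k \<and> k \<notin> I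
           \<and> c * prod_mset (image_mset f W) \<noteq> 0"
  using assms
proof (induction n arbitrary: c k)
  case 0
  then show ?case
    by (intro exI[of _ "{#}"]) (auto simp: contracted_one_def split: if_splits)
next
  case (Suc n)
  let ?h = "contracted_power I f n"
  have "c * contracted_mult I f ?h k \<noteq> 0"
    using Suc.prems by simp
  then have "k \<notin> I"
    and sum_nonzero: "(\<Sum>p\<in>{(x, y). f x \<noteq> 0 \<and> ?h y \<noteq> 0 \<and> x * y = k}. c * f (fst p) * ?h (snd p)) \<noteq> 0"
    unfolding contracted_mult_def by (auto simp: sum_distrib_left mult.assoc split: if_splits)
  obtain p where "p \<in> {(x, y). f x \<noteq> 0 \<and> ?h y \<noteq> 0 \<and> x * y = k}"
      "c * f (fst p) * ?h (snd p) \<noteq> 0"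
    using sum_nonzero by (rule sum.not_neutral_contains_not_neutral)
  then obtain x y where xy: "f x \<noteq> 0" "x * y = k" "c * f x * ?h y \<noteq> 0"
    by auto
  obtain W where "size W = n" "set_mset W \<subseteq> {m. f m \<noteq> 0}" "prod_mset W = y"
      "c * f x * prod_mset (image_mset f W) \<noteq> 0"
    using Suc.IH[OF xy(3)] by blast
  then show ?case
    using xy \<open>k \<notin> I\<close> by (intro exI[of _ "add_mset x W"]) (auto simp: mult.assoc)
qed

lemma contracted_nilpotentI:
  assumes ideal: "\<And>x y. x \<in> I \<Longrightarrow> x * y \<in> I" and f: "finite {m. f m \<noteq> 0}"
    and nil: "\<forall>m. f m \<noteq> 0 \<longrightarrow> (\<exists>q. f m ^ q = 0) \<or> (\<exists>q. m ^ q \<in> I)"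
  shows "\<exists>n. contracted_power I f n = (\<lambda>_. 0 :: 'a::comm_semiring_1)"
proof -
  let ?S = "{m. f m \<noteq> 0}"
  have "\<forall>m\<in>?S. \<exists>q. f m ^ q = 0 \<or> m ^ q \<in> I"
    using nil by blast
  then have "\<exists>q. \<forall>m\<in>?S. f m ^ q m = 0 \<or> m ^ q m \<in> I"
    by (rule bchoice)
  then obtain q where q: "\<forall>m\<in>?S. f m ^ q m = 0 \<or> m ^ q m \<in> I" ..
  have "contracted_power I f (Suc (\<Sum>m\<in>?S. q m)) k = 0" for k
  proof (rule ccontr)
    assume "contracted_power I f (Suc (\<Sum>m\<in>?S. q m)) k \<noteq> 0"
    then have "1 * contracted_power I f (Suc (\<Sum>m\<in>?S. q m)) k \<noteq> 0"
      by simp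
    then obtain W where W: "size W = Suc (\<Sum>m\<in>?S. q m)" "set_mset W \<subseteq> ?S" "prod_mset W = k"
        "k \<notin> I" "1 * prod_mset (image_mset f W) \<noteq> 0"
      using contracted_power_nonzero_word by blast
    have "(\<Sum>m\<in>?S. q m) < size W"
      using W(1) by simp
    then obtain m where m: "m \<in> ?S" "q m \<le> count W m"
      using multiset_pigeonhole[OF f W(2)] by blast
    have "f m ^ q m = 0 \<or> m ^ q m \<in> I"
      using q m(1) by blast
    then show False
    proof
      assume "f m ^ q m = 0"
      moreover have "f m ^ q m dvd prod_mset (image_mset f W)"
        using m(2) by (rule power_dvd_prod_mset_image)
      ultimately show False
        using W(5) by simp
    next
      assume "m ^ q m \<in> I"
      moreover have "m ^ q m dvd k"
        using power_dvd_prod_mset_image[OF m(2), of "\<lambda>x. x"] W(3) by simp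
      ultimately show False
        using W(4) ideal by (auto elim: dvdE)
    qed
  qed
  then show ?thesis by blast
qed

lemma contracted_irreducible:
  fixes I :: "'m::comm_monoid_mult set"
  assumes zero_sum_free: "\<And>a b::'a. a + b = 0 \<Longrightarrow> a = 0"
    and ideal: "\<And>x y. x \<in> I \<Longrightarrow> x * y \<in> I"
    and irrA: "irreducible_str (UNIV :: 'a::comm_semiring_1 set) (*) 0 1"
    and irrM: "\<And>x y. \<exists>n. (x * y) ^ n \<in> I \<Longrightarrow> (\<exists>n. x ^ n \<in> I) \<or> (\<exists>n. y ^ n \<in> I)"
  shows "irreducible_str (contracted_carrier I :: ('m \<Rightarrow> 'a) set) (contracted_mult I) (\<lambda>_. 0)
      (contracted_one I)"
  unfolding irreducible_str_def nilpotent_in_def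
proof (intro ballI impI)
  fix f g :: "'m \<Rightarrow> 'a"
  assume "f \<in> contracted_carrier I" "g \<in> contracted_carrier I"
  then have f: "finite {m. f m \<noteq> 0}" and g: "finite {m. g m \<noteq> 0}"
    by (auto simp: contracted_carrier_def)
  assume "\<exists>n. contracted_power I (contracted_mult I f g) n = (\<lambda>_. 0)"
  then obtain n where n: "contracted_power I (contracted_mult I f g) n = (\<lambda>_. 0)" ..
  show "(\<exists>n. contracted_power I f n = (\<lambda>_. 0)) \<or> (\<exists>n. contracted_power I g n = (\<lambda>_. 0))"
  proof (rule ccontr)
    assume "\<not> ?thesis"
    then obtain m m' where m: "\<forall>q. f m ^ q \<noteq> 0" "\<forall>q. m ^ q \<notin> I"
      and m': "\<forall>q. g m' ^ q \<noteq> 0" "\<forall>q. m' ^ q \<notin> I"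
      using contracted_nilpotentI[OF ideal f] contracted_nilpotentI[OF ideal g] by blast
    have mm': "\<forall>q. (m * m') ^ q \<notin> I"
      using irrM m(2) m'(2) by blast
    have "contracted_mult I f g (m * m') ^ n = 0 \<or> (m * m') ^ n \<in> I"
      by (rule contracted_nilpotentD[OF _ ideal finite_support_contracted_mult[OF f g] n])
        (erule zero_sum_free)
    then have "contracted_mult I f g (m * m') ^ n = 0"
      using mm' by blast
    moreover obtain c where "contracted_mult I f g (m * m') = f m * g m' + c"
      using contracted_mult_split[OF f g] mm'[rule_format, of 1] by (simp only: power_one_right) blast
    ultimately obtain d where "(f m * g m') ^ n + d = 0"
      using power_add_eq_power_plus by metis
    then have "(f m * g m') ^ n = 0"
      by (rule zero_sum_free)
    then show False
      using irrA m(1) m'(1) by (auto simp: irreducible_str_def nilpotent_in_times_iff)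
  qed
qed

lemma contracted_no_zero_divisors:
  fixes I :: "'m::comm_monoid_mult set"
  assumes zero_sum_free: "\<And>a b::'a. a + b = 0 \<Longrightarrow> a = 0"
    and nzdA: "no_zero_divisors_str (UNIV :: 'a::comm_semiring_1 set) (*) 0"
    and prime: "\<And>x y. x \<notin> I \<Longrightarrow> y \<notin> I \<Longrightarrow> x * y \<notin> I"
  shows "no_zero_divisors_str (contracted_carrier I :: ('m \<Rightarrow> 'a) set) (contracted_mult I) (\<lambda>_. 0)"
  unfolding no_zero_divisors_str_def
proof (intro ballI impI)
  fix f g :: "'m \<Rightarrow> 'a"
  assume fC: "f \<in> contracted_carrier I" and gC: "g \<in> contracted_carrier I"
    and fg: "contracted_mult I f g = (\<lambda>_. 0)"
  have f: "finite {m. f m \<noteq> 0}" and g: "finite {m. g m \<noteq> 0}"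
    using fC gC by (auto simp: contracted_carrier_def)
  show "f = (\<lambda>_. 0) \<or> g = (\<lambda>_. 0)"
  proof (rule ccontr)
    assume "\<not> ?thesis"
    then obtain m m' where m: "f m \<noteq> 0" "g m' \<noteq> 0"
      by (auto simp: fun_eq_iff)
    with fC gC have "m \<notin> I" "m' \<notin> I"
      by (auto simp: contracted_carrier_def)
    then obtain c where "contracted_mult I f g (m * m') = f m * g m' + c"
      using contracted_mult_split[OF f g] prime by blast
    then have "f m * g m' + c = 0"
      using fg by simp
    then have "f m * g m' = 0"
      by (rule zero_sum_free)
    then show False
      using nzdA m by (auto simp: no_zero_divisors_str_def)
  qed
qed

theorem proposition5p6:
  assumes idemA: "idempotent_semiring TYPE('a::comm_semiring_1)"
    and irrA: "irreducible_str (UNIV :: 'a set) (*) 0 1"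
  shows
    "(irreducible_str (UNIV :: 'm::{comm_monoid_mult,mult_zero} set) (*) 0 1 \<longrightarrow>
        irreducible_str (tensor_carrier :: ('m \<Rightarrow> 'a) set) tensor_mult tensor_zero tensor_one)
   \<and> (irreducible_str (UNIV :: 'm set) (*) 0 1 \<and>
      no_zero_divisors_str (UNIV :: 'a set) (*) 0 \<and>
      no_zero_divisors_str (UNIV :: 'm set) (*) 0 \<longrightarrow>
        no_zero_divisors_str (tensor_carrier :: ('m \<Rightarrow> 'a) set) tensor_mult tensor_zero)
   \<and> irreducible_str (msr_carrier :: ('n::comm_monoid_mult \<Rightarrow> 'a) set) msr_mult msr_zero msr_one
   \<and> (no_zero_divisors_str (UNIV :: 'a set) (*) 0 \<longrightarrow>
        no_zero_divisors_str (msr_carrier :: ('n \<Rightarrow> 'a) set) msr_mult msr_zero)"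
proof -
  have zero_sum_free: "\<And>a b::'a. a + b = 0 \<Longrightarrow> a = 0"
    using idemA idem_add_eq_0_imp_eq_0 by (metis idempotent_semiring_def)
  have tensor_irreducible:
    "irreducible_str (tensor_carrier :: ('m \<Rightarrow> 'a) set) tensor_mult tensor_zero tensor_one"
    if "irreducible_str (UNIV :: 'm set) (*) 0 1"
    unfolding tensor_as_contracted
    by (rule contracted_irreducible[OF _ _ irrA], erule zero_sum_free, simp)
      (use that in \<open>auto simp: irreducible_str_def nilpotent_in_times_iff\<close>)
  have tensor_no_zero_divisors:
    "no_zero_divisors_str (tensor_carrier :: ('m \<Rightarrow> 'a) set) tensor_mult tensor_zero"
    if "no_zero_divisors_str (UNIV :: 'a set) (*) 0" "no_zero_divisors_str (UNIV :: 'm set) (*) 0"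
    unfolding tensor_as_contracted
    by (rule contracted_no_zero_divisors, erule zero_sum_free)
      (use that in \<open>auto simp: no_zero_divisors_str_def\<close>)
  have "irreducible_str (msr_carrier :: ('n \<Rightarrow> 'a) set) msr_mult msr_zero msr_one"
    unfolding msr_as_contracted
    by (rule contracted_irreducible[OF _ _ irrA], erule zero_sum_free) auto
  moreover have "no_zero_divisors_str (msr_carrier :: ('n \<Rightarrow> 'a) set) msr_mult msr_zero"
    if "no_zero_divisors_str (UNIV :: 'a set) (*) 0"
    unfolding msr_as_contracted
    by (rule contracted_no_zero_divisors, erule zero_sum_free) (use that in auto)
  ultimately show ?thesis
    using tensor_irreducible tensor_no_zero_divisors by blast
qed

end
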